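(* Let $\Lambda_2,\Lambda_3,\Lambda_4\in\mathbb C$ with $\Lambda_4\ne0$ and let $\mathcal V^{[2]}$, $v_\lambda$, $\xi$, $\widetilde{\mathbf L}_\mu$ and $\deg_\delta$ be as in the context. Define $M(v_\mu,v_\lambda)=\xi\big(\widetilde{\mathbf L}_\mu\mathbf L_{-\lambda}|J\rangle\big)$. Then for all partitions $\lambda,\mu$: $M(v_\mu,v_\lambda)=0$ whenever $\deg_1v_\mu>\deg_1v_\lambda$. If moreover $\Lambda_3=0$, then $M(v_\mu,v_\lambda)=0$ whenever $\deg_2v_\mu>\deg_2v_\lambda$.
   Context: $\mathcal V^{[2]}$ is the Virasoro Whittaker module generated by $|J\rangle$ with $L_n|J\rangle=\Lambda_n|J\rangle$ ($n=2,3,4$), $L_n|J\rangle=0$ ($n>4$). Basis $v_\lambda=\mathbf L_{-\lambda}|J\rangle$, $\mathbf L_{-\lambda}=L_{-\lambda_1+2}\cdots L_{-\lambda_\ell+2}$ for partitions $\lambda=(\lambda_1\ge\dots\ge\lambda_\ell\ge1)$, $v_\emptyset=|J\rangle$. $\xi$ is the linear functional giving the coefficient of $|J\rangle$ in this basis. Shifted generators: $\widetilde L_n=L_n-\Lambda_n$ for $n=3,4$ and $\widetilde L_n=L_n$ for $n>4$; $\widetilde{\mathbf L}_\mu=\widetilde L_{\mu_1+2}\cdots\widetilde L_{\mu_m+2}$ for $\mu=(\mu_1\ge\dots\ge\mu_m\ge1)$. For $\delta\in\{1,2\}$ and $\lambda=(\cdots3^{n_3}2^{n_2}1^{n_1})$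 (multiplicity notation), $\deg_\delta v_\lambda=n_1+\delta n_2+\sum_{k>2}n_k(k-2)$; equivalently $\deg_\delta L_{-k}=k$ ($k>0$), $\deg_\delta L_0=\delta$, $\deg_\delta L_1=1$. *)

theory Defs
  imports Complex_Main
begin

definition is_partition :: "nat list \<Rightarrow> bool" where
  "is_partition lam \<longleftrightarrow> sorted_wrt (\<ge>) lam \<and> (\<forall>k\<in>set lam. 1 \<le> k)"

definition Lvec :: "(int \<Rightarrow> 'v \<Rightarrow> 'v) \<Rightarrow> 'v \<Rightarrow> nat list \<Rightarrow> 'v" where
  "Lvec L J lam = foldr (\<lambda>k w. L (2 - int k) w) lam J"

definition Lshift :: "(complex \<Rightarrow> 'v::ab_group_add \<Rightarrow> 'v) \<Rightarrow> (int \<Rightarrow> 'v \<Rightarrow> 'v) \<Rightarrow> complex \<Rightarrow> complex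
    \<Rightarrow> int \<Rightarrow> 'v \<Rightarrow> 'v" where
  "Lshift scale L \<Lambda>3 \<Lambda>4 n x =
     (if n = 3 then L 3 x - scale \<Lambda>3 x
      else if n = 4 then L 4 x - scale \<Lambda>4 x
      else L n x)"

definition Ltilde :: "(complex \<Rightarrow> 'v::ab_group_add \<Rightarrow> 'v) \<Rightarrow> (int \<Rightarrow> 'v \<Rightarrow> 'v) \<Rightarrow> complex
    \<Rightarrow> complex \<Rightarrow> nat list \<Rightarrow> 'v \<Rightarrow> 'v" where
  "Ltilde scale L \<Lambda>3 \<Lambda>4 mu x = foldr (\<lambda>k w. Lshift scale L \<Lambda>3 \<Lambda>4 (int k + 2) w) mu x"

definition part_deg :: "nat \<Rightarrow> nat \<Rightarrow> nat" where
  "part_deg \<delta> k = (if k = 1 then 1 else if k = 2 then \<delta> else k - 2)"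

definition deg :: "nat \<Rightarrow> nat list \<Rightarrow> nat" where
  "deg \<delta> lam = sum_list (map (part_deg \<delta>) lam)"

text \<open>V is (a copy of) the Whittaker module V^[2]: a complex vector space with linear
  operators L_n (n in Z) satisfying the Virasoro relations with central charge c,
  generated by J with L_n J = Lambda_n J (n = 2,3,4), L_n J = 0 (n > 4), such that the
  vectors v_lambda (lambda a partition) are pairwise distinct and form a basis.\<close>
definition whittaker2 :: "(complex \<Rightarrow> 'v::ab_group_add \<Rightarrow> 'v) \<Rightarrow> (int \<Rightarrow> 'v \<Rightarrow> 'v) \<Rightarrow> 'v
    \<Rightarrow> complex \<Rightarrow> complex \<Rightarrow> complex \<Rightarrow> complex \<Rightarrow> bool" where
  "whittaker2 scale L J c \<Lambda>2 \<Lambda>3 \<Lambda>4 \<longleftrightarrow>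
     vector_space scale \<and>
     (\<forall>n. Vector_Spaces.linear scale scale (L n)) \<and>
     (\<forall>m n x. L m (L n x) - L n (L m x) =
        scale (of_int (m - n)) (L (m + n) x)
        + scale (if m + n = 0 then c / 12 * (of_int m ^ 3 - of_int m) else 0) x) \<and>
     L 2 J = scale \<Lambda>2 J \<and> L 3 J = scale \<Lambda>3 J \<and> L 4 J = scale \<Lambda>4 J \<and>
     (\<forall>n>4. L n J = 0) \<and>
     inj_on (Lvec L J) {lam. is_partition lam} \<and>
     \<not> module.dependent scale (Lvec L J ` {lam. is_partition lam}) \<and>
     module.span scale (Lvec L J ` {lam. is_partition lam}) = UNIV"

definition xi :: "(complex \<Rightarrow> 'v::ab_group_add \<Rightarrow> 'v) \<Rightarrow> (int \<Rightarrow> 'v \<Rightarrow> 'v) \<Rightarrow> 'v \<Rightarrow> 'v \<Rightarrow> complex" where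
  "xi scale L J x = module.representation scale (Lvec L J ` {lam. is_partition lam}) x J"

definition Mform :: "(complex \<Rightarrow> 'v::ab_group_add \<Rightarrow> 'v) \<Rightarrow> (int \<Rightarrow> 'v \<Rightarrow> 'v) \<Rightarrow> 'v
    \<Rightarrow> complex \<Rightarrow> complex \<Rightarrow> nat list \<Rightarrow> nat list \<Rightarrow> complex" where
  "Mform scale L J \<Lambda>3 \<Lambda>4 mu lam = xi scale L J (Ltilde scale L \<Lambda>3 \<Lambda>4 mu (Lvec L J lam))"

end

theory Submission
  imports Defs
begin

text \<open>Let F_D be spanned by all words L_a1 ... L_ar |J> with every a_i \<le> 1, in any order,
  whose degree deg_\<delta>, additive over the letters, is at most D. Commuting L_m through such a
  word and using the eigenvalue equations at |J> shows by induction on the word that L_m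
  moves F_D into F_(D + b(m)) for an explicit bound b, and that the shifted generator
  L_(k+2) - \<Lambda>_(k+2) lowers the filtration degree by deg_\<delta> of the part k; for \<delta> = 2 this
  needs L_3 |J> = 0. Hence the vector itself vanishes,
  L~_\<mu> v_\<lambda> \<in> F_(deg \<lambda> - deg \<mu>) = 0.\<close>

definition Lword :: "(int \<Rightarrow> 'v \<Rightarrow> 'v) \<Rightarrow> 'v \<Rightarrow> int list \<Rightarrow> 'v" where
  "Lword L J ws = foldr L ws J"

definition creation_deg :: "nat \<Rightarrow> int \<Rightarrow> int" where
  "creation_deg \<delta> a = (if a = 1 then 1 else if a = 0 then int \<delta> else - a)"

definition word_deg :: "nat \<Rightarrow> int list \<Rightarrow> int" where
  "word_deg \<delta> ws = sum_list (map (creation_deg \<delta>) ws)"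

text \<open>The bound b(m): L_m maps F_D into F_(D + L_deg_bound \<delta> m).\<close>

definition L_deg_bound :: "nat \<Rightarrow> int \<Rightarrow> int" where
  "L_deg_bound \<delta> m =
     (if m \<le> 1 then creation_deg \<delta> m else if m = 2 then 0
      else if m = 3 then (if \<delta> = 1 then 0 else -1) else if m = 4 then 0 else 4 - m)"

definition Lshift_deg :: "nat \<Rightarrow> int \<Rightarrow> int" where
  "Lshift_deg \<delta> m = (if m = 3 then -1 else if m = 4 then - int \<delta> else 4 - m)"

lemma creation_deg_nonneg: "a \<le> 1 \<Longrightarrow> 0 \<le> creation_deg \<delta> a"
  unfolding creation_deg_def by auto

lemma word_deg_nonneg: "\<forall>a\<in>set ws. a \<le> 1 \<Longrightarrow> 0 \<le> word_deg \<delta> ws"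
  unfolding word_deg_def by (induction ws) (auto intro: add_nonneg_nonneg creation_deg_nonneg)

lemma L_deg_bound_0_nonneg: "0 \<le> L_deg_bound \<delta> 0"
  unfolding L_deg_bound_def creation_deg_def by simp

lemma L_deg_bound_commute:
  "\<delta> = 1 \<or> \<delta> = 2 \<Longrightarrow> 2 \<le> m \<Longrightarrow> a \<le> 1 \<Longrightarrow>
    L_deg_bound \<delta> (m + a) \<le> creation_deg \<delta> a + L_deg_bound \<delta> m"
  unfolding L_deg_bound_def creation_deg_def by auto

lemma Lshift_deg_commute:
  "\<delta> = 1 \<or> \<delta> = 2 \<Longrightarrow> 3 \<le> m \<Longrightarrow> a \<le> 1 \<Longrightarrow>
    L_deg_bound \<delta> (m + a) \<le> creation_deg \<delta> a + Lshift_deg \<delta> m"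
  unfolding L_deg_bound_def creation_deg_def Lshift_deg_def by auto

lemma Lshift_deg_part_deg: "1 \<le> k \<Longrightarrow> Lshift_deg \<delta> (int k + 2) = - int (part_deg \<delta> k)"
  unfolding Lshift_deg_def part_deg_def by auto

lemma Lvec_eq_Lword: "Lvec L J lam = Lword L J (map (\<lambda>k. 2 - int k) lam)"
  unfolding Lvec_def Lword_def by (induction lam) auto

lemma word_deg_eq_deg:
  "\<forall>k\<in>set lam. 1 \<le> k \<Longrightarrow> word_deg \<delta> (map (\<lambda>k. 2 - int k) lam) = int (deg \<delta> lam)"
  unfolding word_deg_def deg_def
  by (induction lam) (auto simp: creation_deg_def part_deg_def of_nat_diff)

locale whittaker_rep = vector_space scale for scale :: "complex \<Rightarrow> 'v::ab_group_add \<Rightarrow> 'v" +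
  fixes L :: "int \<Rightarrow> 'v \<Rightarrow> 'v" and J :: 'v and c \<Lambda>2 \<Lambda>3 \<Lambda>4 :: complex
  assumes linear_L: "\<And>n. Vector_Spaces.linear scale scale (L n)"
    and L_commutator: "\<And>m n x. L m (L n x) - L n (L m x) =
        scale (of_int (m - n)) (L (m + n) x)
        + scale (if m + n = 0 then c / 12 * (of_int m ^ 3 - of_int m) else 0) x"
    and L2_J: "L 2 J = scale \<Lambda>2 J" and L3_J: "L 3 J = scale \<Lambda>3 J"
    and L4_J: "L 4 J = scale \<Lambda>4 J" and L_J_eq_0: "\<And>n. 4 < n \<Longrightarrow> L n J = 0"
begin

abbreviation Lsh :: "int \<Rightarrow> 'v \<Rightarrow> 'v" where
  "Lsh \<equiv> Lshift scale L \<Lambda>3 \<Lambda>4"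

definition Fil :: "nat \<Rightarrow> int \<Rightarrow> 'v set" where
  "Fil \<delta> D = span {Lword L J ws | ws. (\<forall>a\<in>set ws. a \<le> 1) \<and> word_deg \<delta> ws \<le> D}"

lemma subspace_Fil: "subspace (Fil \<delta> D)"
  unfolding Fil_def by simp

lemma Fil_mono: "D \<le> D' \<Longrightarrow> x \<in> Fil \<delta> D \<Longrightarrow> x \<in> Fil \<delta> D'"
  unfolding Fil_def by (erule rev_subsetD[OF _ span_mono]) auto

lemma Lword_in_Fil: "\<forall>a\<in>set ws. a \<le> 1 \<Longrightarrow> word_deg \<delta> ws \<le> D \<Longrightarrow> Lword L J ws \<in> Fil \<delta> D"
  unfolding Fil_def by (rule span_base) blast

lemma scale_in_Fil: "x \<in> Fil \<delta> D \<Longrightarrow> scale k x \<in> Fil \<delta> D"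
  unfolding Fil_def by (rule span_scale)

lemma Fil_neg_eq_0:
  assumes "D < 0" and "x \<in> Fil \<delta> D"
  shows "x = 0"
proof -
  have "{Lword L J ws | ws. (\<forall>a\<in>set ws. a \<le> 1) \<and> word_deg \<delta> ws \<le> D} = {}"
    using \<open>D < 0\<close> word_deg_nonneg[of _ \<delta>] by force
  with \<open>x \<in> Fil \<delta> D\<close> show ?thesis
    unfolding Fil_def by simp
qed

lemma linear_image_Fil:
  assumes f: "Vector_Spaces.linear scale scale f"
    and gen: "\<And>ws. \<forall>a\<in>set ws. a \<le> 1 \<Longrightarrow> word_deg \<delta> ws \<le> D \<Longrightarrow> f (Lword L J ws) \<in> Fil \<delta> D'"
    and x: "x \<in> Fil \<delta> D"
  shows "f x \<in> Fil \<delta> D'"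
proof -
  interpret Vector_Spaces.linear scale scale f by (rule f)
  have "f ` Fil \<delta> D \<subseteq> Fil \<delta> D'"
    unfolding Fil_def span_image[symmetric]
    by (rule span_minimal) (use gen in \<open>auto simp: Fil_def[symmetric] subspace_Fil\<close>)
  then show ?thesis using x by blast
qed

lemma L_creation_Fil: "a \<le> 1 \<Longrightarrow> x \<in> Fil \<delta> D \<Longrightarrow> L a x \<in> Fil \<delta> (D + creation_deg \<delta> a)"
  by (erule linear_image_Fil[OF linear_L, rotated])
    (use Lword_in_Fil[of "a # _"] in \<open>auto simp: Lword_def word_deg_def\<close>)

lemma linear_Lsh: "Vector_Spaces.linear scale scale (Lsh n)"
  using linear_L[of 3] linear_L[of 4] linear_L[of n]
  unfolding Vector_Spaces.linear_iff Lshift_def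
  by (simp add: scale_right_distrib scale_right_diff_distrib mult.commute)

lemma L_commute: "L m (L a x) = L a (L m x) + scale (of_int (m - a)) (L (m + a) x)
    + scale (if m + a = 0 then c / 12 * (of_int m ^ 3 - of_int m) else 0) x"
  using L_commutator[of m a x] by (simp add: algebra_simps)

lemma Lsh_eq: "Lsh m y = L m y - scale (if m = 3 then \<Lambda>3 else if m = 4 then \<Lambda>4 else 0) y"
  by (simp add: Lshift_def)

lemma Lsh_commute: "Lsh m (L a x) = L a (Lsh m x) + scale (of_int (m - a)) (L (m + a) x)
    + scale (if m + a = 0 then c / 12 * (of_int m ^ 3 - of_int m) else 0) x"
proof -
  interpret La: Vector_Spaces.linear scale scale "L a" by (rule linear_L)
  let ?\<Lambda> = "if m = 3 then \<Lambda>3 else if m = 4 then \<Lambda>4 else 0"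
  have "Lsh m (L a x) = L m (L a x) - scale ?\<Lambda> (L a x)"
    by (rule Lsh_eq)
  also have "\<dots> = (L a (L m x) - scale ?\<Lambda> (L a x)) + scale (of_int (m - a)) (L (m + a) x)
      + scale (if m + a = 0 then c / 12 * (of_int m ^ 3 - of_int m) else 0) x"
    unfolding L_commute[of m a x] by (simp add: algebra_simps)
  also have "L a (L m x) - scale ?\<Lambda> (L a x) = L a (Lsh m x)"
    by (simp only: Lsh_eq La.diff La.scale)
  finally show ?thesis .
qed

lemma commutator_in_Fil:
  assumes X: "X (L a w) = L a (X w) + scale (of_int (m - a)) (L (m + a) w)
      + scale (if m + a = 0 then k else 0) w"
    and a: "a \<le> 1" and w: "w \<in> Fil \<delta> D" and Xw: "X w \<in> Fil \<delta> (D + b)"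
    and Lw: "L (m + a) w \<in> Fil \<delta> (D + L_deg_bound \<delta> (m + a))"
    and le: "L_deg_bound \<delta> (m + a) \<le> creation_deg \<delta> a + b"
  shows "X (L a w) \<in> Fil \<delta> (D + creation_deg \<delta> a + b)"
proof -
  have "L a (X w) \<in> Fil \<delta> (D + creation_deg \<delta> a + b)"
    using L_creation_Fil[OF a Xw] by (simp add: algebra_simps)
  moreover have "scale (of_int (m - a)) (L (m + a) w) \<in> Fil \<delta> (D + creation_deg \<delta> a + b)"
    using Fil_mono[OF _ Lw] le by (simp add: scale_in_Fil)
  moreover have "scale (if m + a = 0 then k else 0) w \<in> Fil \<delta> (D + creation_deg \<delta> a + b)"
  proof (cases "m + a = 0")
    case True
    with le L_deg_bound_0_nonneg[of \<delta>] have "D \<le> D + creation_deg \<delta> a + b" by simp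
    with True show ?thesis by (simp add: Fil_mono[OF _ w] scale_in_Fil)
  qed (simp add: Fil_def span_zero)
  ultimately show ?thesis
    unfolding X by (simp add: subspace_add[OF subspace_Fil])
qed

context
  fixes \<delta> :: nat
  assumes \<delta>: "\<delta> = 1 \<or> \<delta> = 2 \<and> \<Lambda>3 = 0"
begin

lemma L_J_in_Fil: "L m J \<in> Fil \<delta> (L_deg_bound \<delta> m)"
proof -
  have J: "scale k J \<in> Fil \<delta> D" if "0 \<le> D" for k D
    using Lword_in_Fil[of "[]" \<delta> D] that by (simp add: Lword_def word_deg_def scale_in_Fil)
  have zero: "0 \<in> Fil \<delta> D" for D
    by (simp add: Fil_def span_zero)
  consider "m \<le> 1" | "m = 2" | "m = 3" | "m = 4" | "4 < m" by linarith
  then show ?thesis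
  proof cases
    case 1
    then show ?thesis
      using Lword_in_Fil[of "[m]"] by (simp add: Lword_def word_deg_def L_deg_bound_def)
  qed (use J zero \<delta> in \<open>auto simp: L2_J L3_J L4_J L_J_eq_0 L_deg_bound_def\<close>)
qed

lemma Lsh_J_in_Fil: "3 \<le> m \<Longrightarrow> Lsh m J \<in> Fil \<delta> (Lshift_deg \<delta> m)"
  by (auto simp: Lshift_def L3_J L4_J L_J_eq_0 Fil_def span_zero)

lemma L_Lword_in_Fil:
  "\<forall>a\<in>set ws. a \<le> 1 \<Longrightarrow>
    L m (Lword L J ws) \<in> Fil \<delta> (word_deg \<delta> ws + L_deg_bound \<delta> m) \<and>
    (3 \<le> m \<longrightarrow> Lsh m (Lword L J ws) \<in> Fil \<delta> (word_deg \<delta> ws + Lshift_deg \<delta> m))"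
proof (induction ws arbitrary: m)
  case Nil
  show ?case using L_J_in_Fil Lsh_J_in_Fil by (simp add: Lword_def word_deg_def)
next
  case (Cons a ws)
  have a: "a \<le> 1" and ws: "\<forall>a\<in>set ws. a \<le> 1" using Cons.prems by auto
  define w where "w = Lword L J ws"
  have w_Fil: "w \<in> Fil \<delta> (word_deg \<delta> ws)" unfolding w_def using Lword_in_Fil[OF ws] by simp
  have deg_Cons: "word_deg \<delta> (a # ws) = word_deg \<delta> ws + creation_deg \<delta> a"
    by (simp add: word_deg_def)
  have Lw: "\<And>m. L m w \<in> Fil \<delta> (word_deg \<delta> ws + L_deg_bound \<delta> m)"
    and Lsh_w: "\<And>m. 3 \<le> m \<Longrightarrow> Lsh m w \<in> Fil \<delta> (word_deg \<delta> ws + Lshift_deg \<delta> m)"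
    using Cons.IH[OF ws] by (simp_all add: w_def)
  have \<delta>12: "\<delta> = 1 \<or> \<delta> = 2" using \<delta> by auto
  have "L m (L a w) \<in> Fil \<delta> (word_deg \<delta> (a # ws) + L_deg_bound \<delta> m)"
  proof (cases "m \<le> 1")
    case True
    then show ?thesis using Lword_in_Fil[of "m # a # ws"] Cons.prems
      by (simp add: w_def Lword_def word_deg_def L_deg_bound_def)
  next
    case False
    then have "2 \<le> m" by simp
    then show ?thesis
      using commutator_in_Fil[where X = "L m", OF L_commute a w_Fil Lw Lw
          L_deg_bound_commute[OF \<delta>12 \<open>2 \<le> m\<close> a]]
      by (simp add: deg_Cons algebra_simps)
  qed
  moreover have "Lsh m (L a w) \<in> Fil \<delta> (word_deg \<delta> (a # ws) + Lshift_deg \<delta> m)" if "3 \<le> m"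
    using commutator_in_Fil[where X = "Lsh m", OF Lsh_commute a w_Fil Lsh_w[OF that] Lw
        Lshift_deg_commute[OF \<delta>12 that a]]
    by (simp add: deg_Cons algebra_simps)
  ultimately show ?case by (simp add: w_def Lword_def)
qed

lemma Lsh_Fil:
  assumes m: "3 \<le> m" and x: "x \<in> Fil \<delta> D"
  shows "Lsh m x \<in> Fil \<delta> (D + Lshift_deg \<delta> m)"
  using x
proof (rule linear_image_Fil[OF linear_Lsh, rotated])
  fix ws assume "\<forall>a\<in>set ws. a \<le> 1" and "word_deg \<delta> ws \<le> D"
  with m have "Lsh m (Lword L J ws) \<in> Fil \<delta> (word_deg \<delta> ws + Lshift_deg \<delta> m)"
    using L_Lword_in_Fil by blast
  then show "Lsh m (Lword L J ws) \<in> Fil \<delta> (D + Lshift_deg \<delta> m)"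
    by (rule Fil_mono[rotated]) (use \<open>word_deg \<delta> ws \<le> D\<close> in simp)
qed

lemma Ltilde_Fil:
  "\<forall>k\<in>set mu. 1 \<le> k \<Longrightarrow> x \<in> Fil \<delta> D \<Longrightarrow>
    Ltilde scale L \<Lambda>3 \<Lambda>4 mu x \<in> Fil \<delta> (D - int (deg \<delta> mu))"
proof (induction mu)
  case Nil
  then show ?case by (simp add: Ltilde_def deg_def)
next
  case (Cons k mu)
  then have k: "3 \<le> int k + 2"
    and IH: "Ltilde scale L \<Lambda>3 \<Lambda>4 mu x \<in> Fil \<delta> (D - int (deg \<delta> mu))"
    by simp_all
  have "Lsh (int k + 2) (Ltilde scale L \<Lambda>3 \<Lambda>4 mu x)
      \<in> Fil \<delta> (D - int (deg \<delta> mu) - int (part_deg \<delta> k))"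
    using Lsh_Fil[OF k IH] k by (simp add: Lshift_deg_part_deg)
  then show ?case
    by (simp add: Ltilde_def deg_def algebra_simps)
qed

lemma Ltilde_Lvec_eq_0:
  assumes lam: "\<forall>k\<in>set lam. 1 \<le> k" and mu: "\<forall>k\<in>set mu. 1 \<le> k"
    and less: "deg \<delta> lam < deg \<delta> mu"
  shows "Ltilde scale L \<Lambda>3 \<Lambda>4 mu (Lvec L J lam) = 0"
proof -
  have "Lvec L J lam \<in> Fil \<delta> (int (deg \<delta> lam))"
    using Lword_in_Fil lam word_deg_eq_deg[OF lam] by (auto simp: Lvec_eq_Lword)
  from Ltilde_Fil[OF mu this] less show ?thesis
    by (intro Fil_neg_eq_0[of "int (deg \<delta> lam) - int (deg \<delta> mu)"]) auto
qed

end

end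

lemma whittaker2_imp_whittaker_rep:
  "whittaker2 scale L J c \<Lambda>2 \<Lambda>3 \<Lambda>4 \<Longrightarrow> whittaker_rep scale L J c \<Lambda>2 \<Lambda>3 \<Lambda>4"
  unfolding whittaker2_def whittaker_rep_def whittaker_rep_axioms_def by auto

theorem lemmaA3:
  fixes scale :: "complex \<Rightarrow> 'v::ab_group_add \<Rightarrow> 'v"
    and L :: "int \<Rightarrow> 'v \<Rightarrow> 'v" and J :: 'v
    and c \<Lambda>2 \<Lambda>3 \<Lambda>4 :: complex
  assumes W: "whittaker2 scale L J c \<Lambda>2 \<Lambda>3 \<Lambda>4"
    and nz: "\<Lambda>4 \<noteq> 0"
  shows "(\<forall>lam mu. is_partition lam \<and> is_partition mu \<and> deg 1 mu > deg 1 lam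
            \<longrightarrow> Mform scale L J \<Lambda>3 \<Lambda>4 mu lam = 0)
       \<and> (\<Lambda>3 = 0 \<longrightarrow> (\<forall>lam mu. is_partition lam \<and> is_partition mu \<and> deg 2 mu > deg 2 lam
            \<longrightarrow> Mform scale L J \<Lambda>3 \<Lambda>4 mu lam = 0))"
proof -
  interpret whittaker_rep scale L J c \<Lambda>2 \<Lambda>3 \<Lambda>4
    using whittaker2_imp_whittaker_rep[OF W] .
  have M_eq_0: "Mform scale L J \<Lambda>3 \<Lambda>4 mu lam = 0"
    if "\<delta> = 1 \<or> \<delta> = 2 \<and> \<Lambda>3 = 0" "is_partition lam" "is_partition mu" "deg \<delta> lam < deg \<delta> mu"
    for \<delta> lam mu
    using Ltilde_Lvec_eq_0[OF that(1) _ _ that(4)] that(2,3)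
    by (simp add: Mform_def xi_def is_partition_def representation_zero)
  show ?thesis
    using M_eq_0[of 1] M_eq_0[of 2] by auto
qed

end
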